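(* Let $G=(V,E)$ be a $2$-edge-strongly biconnected directed graph. Then the directed graph output by Algorithm A (described in the context) on input $G$ is $2$-edge-strongly biconnected.
   Context: A directed graph is strongly biconnected if it is strongly connected and its underlying undirected graph (ignoring edge directions) is biconnected. A strongly biconnected component of a directed graph is a maximal strongly biconnected subgraph. A strongly biconnected directed graph $G=(V,E)$ is $2$-edge-strongly biconnected if it has at least three vertices and $(V,E\setminus\{e\})$ is strongly biconnected for every $e\in E$. For a directed graph $D=(V,F)$, an edge $e\in F$ is a b-bridge if $(V,F\setminus\{e\})$ is not strongly biconnected. A directed graph is $2$-edge-connected if it is strongly connected and remains strongly connected after deleting any single edge. Algorithm A, on input a $2$-edge-strongly biconnected directed graph $G=(V,E)$: (1) Choose $U\subseteq E$ such that $H=(V,U)$ is a minimal $2$-edge-connected spanning subgraph of $G$ (i.e. $H$ is $2$-edge-connected and deleting any edge of $U$ destroys $2$-edge-connectivity). (2) If $H$ is $2$-edge-strongly biconnected, output $H$ and stop. (3) Otherwise set $E_{2e}:=U$. While the underlying undirected graph of $(V,E_{2e})$ is not biconnected: compute the strongly biconnected components of $(V,E_{2e})$, find an edge $(v,w)\in E\setminus E_{2e}$ such that $v,w$ are not in the same strongly biconnected component of $(V,E_{2e})$, and add $(v,w)$ to $E_{2e}$. (4) Compute the set of b-bridges of $(V,E_{2e})$. For each such b-bridge $t$: while the underlying undirected graph of $(V,E_{2e}\setminus\{t\})$ is not biconnected, compute the strongly biconnected components of $(V,E_{2e}\setminus\{t\})$, find an edge $(u,w)\in E\setminus E_{2e}$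 such that $u,w$ are not in the same strongly biconnected component of $(V,E_{2e}\setminus\{t\})$, and add $(u,w)$ to $E_{2e}$. (5) Output $(V,E_{2e})$. *)

theory Defs
  imports Main
begin

definition digraph :: "'a set \<Rightarrow> ('a \<times> 'a) set \<Rightarrow> bool" where
  "digraph V E \<longleftrightarrow> finite V \<and> E \<subseteq> V \<times> V"

definition strongly_connected :: "'a set \<Rightarrow> ('a \<times> 'a) set \<Rightarrow> bool" where
  "strongly_connected V E \<longleftrightarrow> (\<forall>u\<in>V. \<forall>v\<in>V. (u, v) \<in> (E \<inter> (V \<times> V))\<^sup>*)"

definition und_edges :: "'a set \<Rightarrow> ('a \<times> 'a) set \<Rightarrow> ('a \<times> 'a) set" where
  "und_edges W E = {(u, v). u \<in> W \<and> v \<in> W \<and> ((u, v) \<in> E \<or> (v, u) \<in> E)}"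

definition und_connected :: "'a set \<Rightarrow> ('a \<times> 'a) set \<Rightarrow> bool" where
  "und_connected W E \<longleftrightarrow> (\<forall>u\<in>W. \<forall>v\<in>W. (u, v) \<in> (und_edges W E)\<^sup>*)"

definition und_biconnected :: "'a set \<Rightarrow> ('a \<times> 'a) set \<Rightarrow> bool" where
  "und_biconnected V E \<longleftrightarrow> und_connected V E \<and> (\<forall>x\<in>V. und_connected (V - {x}) E)"

definition strongly_biconnected :: "'a set \<Rightarrow> ('a \<times> 'a) set \<Rightarrow> bool" where
  "strongly_biconnected V E \<longleftrightarrow> strongly_connected V E \<and> und_biconnected V E"

definition is_subgraph :: "'a set \<Rightarrow> ('a \<times> 'a) set \<Rightarrow> 'a set \<Rightarrow> ('a \<times> 'a) set \<Rightarrow> bool" where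
  "is_subgraph V' E' V E \<longleftrightarrow> V' \<subseteq> V \<and> E' \<subseteq> E \<inter> (V' \<times> V')"

definition is_sbc :: "'a set \<Rightarrow> ('a \<times> 'a) set \<Rightarrow> 'a set \<Rightarrow> ('a \<times> 'a) set \<Rightarrow> bool" where
  "is_sbc V E V' E' \<longleftrightarrow> is_subgraph V' E' V E \<and> strongly_biconnected V' E' \<and>
     (\<forall>V'' E''. is_subgraph V'' E'' V E \<and> strongly_biconnected V'' E'' \<and>
        V' \<subseteq> V'' \<and> E' \<subseteq> E'' \<longrightarrow> V'' = V' \<and> E'' = E')"

definition same_sbc :: "'a set \<Rightarrow> ('a \<times> 'a) set \<Rightarrow> 'a \<Rightarrow> 'a \<Rightarrow> bool" where
  "same_sbc V E v w \<longleftrightarrow> (\<exists>V' E'. is_sbc V E V' E' \<and> v \<in> V' \<and> w \<in> V')"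

definition two_edge_connected :: "'a set \<Rightarrow> ('a \<times> 'a) set \<Rightarrow> bool" where
  "two_edge_connected V E \<longleftrightarrow> strongly_connected V E \<and>
     (\<forall>e\<in>E. strongly_connected V (E - {e}))"

definition two_edge_sb :: "'a set \<Rightarrow> ('a \<times> 'a) set \<Rightarrow> bool" where
  "two_edge_sb V E \<longleftrightarrow> strongly_biconnected V E \<and> card V \<ge> 3 \<and>
     (\<forall>e\<in>E. strongly_biconnected V (E - {e}))"

definition b_bridge :: "'a set \<Rightarrow> ('a \<times> 'a) set \<Rightarrow> ('a \<times> 'a) \<Rightarrow> bool" where
  "b_bridge V F e \<longleftrightarrow> e \<in> F \<and> \<not> strongly_biconnected V (F - {e})"

definition min_2ec_spanning :: "'a set \<Rightarrow> ('a \<times> 'a) set \<Rightarrow> ('a \<times> 'a) set \<Rightarrow> bool" where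
  "min_2ec_spanning V E U \<longleftrightarrow> U \<subseteq> E \<and> two_edge_connected V U \<and>
     (\<forall>e\<in>U. \<not> two_edge_connected V (U - {e}))"

text \<open>One iteration of the while loop of step (3).\<close>
definition step3 :: "'a set \<Rightarrow> ('a \<times> 'a) set \<Rightarrow> (('a \<times> 'a) set \<times> ('a \<times> 'a) set) set" where
  "step3 V E = {(F, insert (v, w) F) | F v w.
      \<not> und_biconnected V F \<and> (v, w) \<in> E - F \<and> \<not> same_sbc V F v w}"

text \<open>One iteration of the inner while loop of step (4) for the b-bridge t.\<close>
definition step4 :: "'a set \<Rightarrow> ('a \<times> 'a) set \<Rightarrow> ('a \<times> 'a) \<Rightarrow>
    (('a \<times> 'a) set \<times> ('a \<times> 'a) set) set" where
  "step4 V E t = {(F, insert (u, w) F) | F u w.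
      \<not> und_biconnected V (F - {t}) \<and> (u, w) \<in> E - F \<and> \<not> same_sbc V (F - {t}) u w}"

text \<open>Processing the b-bridges in the order given by the list (a full run of the
  inner while loop for each of them, in turn).\<close>
inductive process_bridges :: "'a set \<Rightarrow> ('a \<times> 'a) set \<Rightarrow> ('a \<times> 'a) list \<Rightarrow>
    ('a \<times> 'a) set \<Rightarrow> ('a \<times> 'a) set \<Rightarrow> bool" for V E where
  Nil: "process_bridges V E [] F F"
| Cons: "(F, F1) \<in> (step4 V E t)\<^sup>* \<Longrightarrow> und_biconnected V (F1 - {t}) \<Longrightarrow>
         process_bridges V E ts F1 F2 \<Longrightarrow> process_bridges V E (t # ts) F F2"

text \<open>H is a possible output (edge set; the vertex set is V) of Algorithm A on
  input (V, E), for some admissible choices made by the algorithm.\<close>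
definition algA_output :: "'a set \<Rightarrow> ('a \<times> 'a) set \<Rightarrow> ('a \<times> 'a) set \<Rightarrow> bool" where
  "algA_output V E H \<longleftrightarrow>
     (\<exists>U. min_2ec_spanning V E U \<and>
        ((two_edge_sb V U \<and> H = U) \<or>
         (\<not> two_edge_sb V U \<and>
          (\<exists>F2 ts. (U, F2) \<in> (step3 V E)\<^sup>* \<and> und_biconnected V F2 \<and>
             distinct ts \<and> set ts = {t. b_bridge V F2 t} \<and>
             process_bridges V E ts F2 H))))"

end

theory Submission
  imports Defs
begin

text \<open>Every step of Algorithm A only adds edges of \<open>G\<close> to \<open>U\<close>, and all properties
  involved are monotone in the edge set. Deleting an edge \<open>e\<close> from the output \<open>H\<close>
  keeps it strongly connected because \<open>H - {e}\<close> still contains \<open>U - {e}\<close> and \<open>U\<close> is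
  2-edge-connected. Its underlying graph stays biconnected: if \<open>e\<close> is not a b-bridge
  of the graph \<open>F\<close> reached after step (3), then \<open>H - {e}\<close> contains the biconnected
  \<open>F - {e}\<close>; if it is, step (4) ran its loop for \<open>e\<close> until \<open>H - {e}\<close> was biconnected.\<close>

lemma strongly_connected_mono:
  "strongly_connected V A \<Longrightarrow> A \<subseteq> B \<Longrightarrow> strongly_connected V B"
  unfolding strongly_connected_def by (meson Int_mono order_refl rtrancl_mono subsetD)

lemma und_connected_mono:
  assumes "und_connected W A" and "A \<subseteq> B"
  shows "und_connected W B"
proof -
  have "und_edges W A \<subseteq> und_edges W B"
    using assms(2) unfolding und_edges_def by auto
  then show ?thesis
    using assms(1) unfolding und_connected_def by (meson rtrancl_mono subsetD)
qed

lemma und_biconnected_mono: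
  "und_biconnected V A \<Longrightarrow> A \<subseteq> B \<Longrightarrow> und_biconnected V B"
  unfolding und_biconnected_def using und_connected_mono by blast

lemma rtrancl_subset_if_steps_subset:
  assumes "\<And>F G. (F, G) \<in> R \<Longrightarrow> F \<subseteq> G" and "(F, G) \<in> R\<^sup>*"
  shows "F \<subseteq> G"
  using assms(2) by (induction rule: rtrancl_induct) (auto dest: assms(1))

lemma step3_rtrancl_subset: "(F, G) \<in> (step3 V E)\<^sup>* \<Longrightarrow> F \<subseteq> G"
  by (rule rtrancl_subset_if_steps_subset) (auto simp: step3_def)

lemma step4_rtrancl_subset: "(F, G) \<in> (step4 V E t)\<^sup>* \<Longrightarrow> F \<subseteq> G"
  by (rule rtrancl_subset_if_steps_subset) (auto simp: step4_def)

lemma process_bridges_subset_und_biconnected_minus: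
  assumes "process_bridges V E ts F H"
  shows "F \<subseteq> H \<and> (\<forall>t\<in>set ts. und_biconnected V (H - {t}))"
  using assms
proof (induction rule: process_bridges.induct)
  case (Nil F)
  then show ?case by simp
next
  case (Cons F F1 t ts F2)
  have "F \<subseteq> F1"
    using Cons(1) by (rule step4_rtrancl_subset)
  moreover have "F1 - {t} \<subseteq> F2 - {t}"
    using Cons.IH by blast
  ultimately show ?case
    using Cons.IH Cons(2) und_biconnected_mono by fastforce
qed

lemma strongly_connected_minus_if_two_edge_connected_subset:
  assumes "two_edge_connected V U" and "U \<subseteq> H"
  shows "strongly_connected V (H - {e})"
proof (cases "e \<in> U")
  case True
  then have "strongly_connected V (U - {e})"
    using assms(1) unfolding two_edge_connected_def by blast
  then show ?thesis
    using assms(2) strongly_connected_mono[of V "U - {e}" "H - {e}"] by blast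
next
  case False
  then have "U \<subseteq> H - {e}"
    using assms(2) by blast
  then show ?thesis
    using assms(1) strongly_connected_mono unfolding two_edge_connected_def by blast
qed

lemma und_biconnected_minus_if_not_b_bridge:
  assumes "und_biconnected V F" and "\<not> b_bridge V F e"
  shows "und_biconnected V (F - {e})"
  using assms unfolding b_bridge_def strongly_biconnected_def
  by (cases "e \<in> F") auto

lemma two_edge_sb_after_bridge_processing:
  assumes "card V \<ge> 3" and "two_edge_connected V U" and "U \<subseteq> F"
    and "und_biconnected V F" and "set ts = {t. b_bridge V F t}"
    and "process_bridges V E ts F H"
  shows "two_edge_sb V H"
proof -
  have "F \<subseteq> H" and bridges: "\<And>t. t \<in> set ts \<Longrightarrow> und_biconnected V (H - {t})"
    using process_bridges_subset_und_biconnected_minus[OF assms(6)] by auto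
  have sb_minus: "strongly_biconnected V (H - {e})" for e
  proof -
    have "und_biconnected V (H - {e})"
    proof (cases "b_bridge V F e")
      case True
      then show ?thesis using bridges assms(5) by blast
    next
      case False
      then have "und_biconnected V (F - {e})"
        by (rule und_biconnected_minus_if_not_b_bridge[OF assms(4)])
      then show ?thesis
        using \<open>F \<subseteq> H\<close> und_biconnected_mono[of V "F - {e}" "H - {e}"] by blast
    qed
    moreover have "strongly_connected V (H - {e})"
      using assms(2,3) \<open>F \<subseteq> H\<close> strongly_connected_minus_if_two_edge_connected_subset
      by blast
    ultimately show ?thesis
      unfolding strongly_biconnected_def by blast
  qed
  have "strongly_connected V U"
    using assms(2) unfolding two_edge_connected_def by blast
  then have "strongly_biconnected V H"
    using assms(3,4) \<open>F \<subseteq> H\<close> strongly_connected_mono und_biconnected_mono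
    unfolding strongly_biconnected_def by (meson order_trans)
  then show ?thesis
    using assms(1) sb_minus unfolding two_edge_sb_def by blast
qed

theorem mainTheorem2:
  fixes V :: "'a set" and E H :: "('a \<times> 'a) set"
  assumes "digraph V E"
    and "two_edge_sb V E"
    and "algA_output V E H"
  shows "two_edge_sb V H"
proof -
  obtain U where U: "min_2ec_spanning V E U"
    and result: "(two_edge_sb V U \<and> H = U) \<or>
         (\<exists>F ts. (U, F) \<in> (step3 V E)\<^sup>* \<and> und_biconnected V F \<and>
            set ts = {t. b_bridge V F t} \<and> process_bridges V E ts F H)"
    using assms(3) unfolding algA_output_def by blast
  have card: "card V \<ge> 3"
    using assms(2) unfolding two_edge_sb_def by blast
  have U_2ec: "two_edge_connected V U"
    using U unfolding min_2ec_spanning_def by blast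
  show ?thesis
    using result
  proof (elim disjE exE conjE)
    fix F ts
    assume "(U, F) \<in> (step3 V E)\<^sup>*" and "und_biconnected V F"
      and "set ts = {t. b_bridge V F t}" and "process_bridges V E ts F H"
    then show ?thesis
      using two_edge_sb_after_bridge_processing[OF card U_2ec step3_rtrancl_subset]
      by blast
  qed simp
qed

end
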